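(* Let $O,A,B$ be three pairwise distinct points of the plane, $\vec\alpha=\overrightarrow{AO}/OA$, $\vec\beta=\overrightarrow{OB}/OB$, with oriented angle $\Omega=(\widehat{\vec\alpha,\vec\beta})\in\,]0,\pi[$. Identify the plane with $\mathbb{C}$ via the orthonormal frame with origin $A$ and first axis $\vec\alpha$, and let $b$ be the affix of $B$. Let $p\ge1$ and $\theta_0=\Omega/p$. For $R=(R_0,\dots,R_{p-1})\in(\mathbb{R}_+^* )^p$, let $X$ be the curve starting at $A$ with tangent $\vec\alpha$ made of $p$ consecutive arcs of circle, the $k$-th of radius $R_k$, each turning counterclockwise by the angle $\theta_0$. Then $X$ belongs to $\mathcal{E}$ if and only if $$b=\sum_{k=0}^{p-1} i\,(1-e^{i\theta_0})\,e^{ik\theta_0}R_k,$$ which is equivalent to the real linear system $\mathcal{A}R=\mathcal{B}$, where $\mathcal{A}\in\mathcal{M}_{2,p}(\mathbb{R})$ has entries $\mathcal{A}_{1,k}=\operatorname{Re}\big(i(1-e^{i\theta_0})e^{i(k-1)\theta_0}\big)$, $\mathcal{A}_{2,k}=\operatorname{Im}\big(i(1-e^{i\theta_0})e^{i(k-1)\theta_0}\big)$ for $1\le k\le p$, and $\mathcal{B}=(\operatorname{Re} b,\operatorname{Im} b)^T$. Moreover, $$\big\|\,\|X''\|\,\big\|_{L^\infty(0,L)}=\frac{1}{\min_{0\le k\le p-1}R_k}.$$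
   Context: $\mathcal{E}$ is the set of curves $X:[0,L]\to\mathbb{R}^2$ ($L>0$), $X\in W^{2,\infty}(0,L;\mathbb{R}^2)$, with $\|X'(s)\|=1$, $X(0)=A$, $X(L)=B$, $X'(0)=\vec\alpha$, $X'(L)=\vec\beta$, and with a nondecreasing continuous determination of the angle $\phi(s)=(\widehat{\vec\alpha,X'(s)})$. $\|\,\|X''\|\,\|_{L^\infty}$ is the essential supremum of $s\mapsto\|X''(s)\|$. *)

theory Defs
  imports "HOL-Analysis.Analysis" "HOL-Probability.Essential_Supremum"
begin

text \<open>W^{2,\<infinity>}(0,L): X is differentiable on [0,L] with derivative X1, and X1 is the
  indefinite integral of an essentially bounded integrable function X2 (the weak second
  derivative, which lies in L^\<infinity>).\<close>
definition W2inf :: "real \<Rightarrow> (real \<Rightarrow> complex) \<Rightarrow> bool" where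
  "W2inf L X \<longleftrightarrow> (\<exists>X1 X2.
      (\<forall>t\<in>{0..L}. (X has_vector_derivative X1 t) (at t within {0..L})) \<and>
      X2 integrable_on {0..L} \<and>
      (\<exists>C. AE t in lebesgue_on {0..L}. norm (X2 t) \<le> C) \<and>
      (\<forall>t\<in>{0..L}. X1 t = X1 0 + integral {0..t} X2))"

definition dcurve :: "real \<Rightarrow> (real \<Rightarrow> complex) \<Rightarrow> real \<Rightarrow> complex" where
  "dcurve L X s = vector_derivative X (at s within {0..L})"

text \<open>The admissible set \<E> (depending on A, B, alpha, beta), for a curve X on [0,L].
  The angle phi(s) = (alpha, X'(s)) is encoded by X'(s) = alpha * cis(phi s).\<close>
definition in_E :: "complex \<Rightarrow> complex \<Rightarrow> complex \<Rightarrow> complex \<Rightarrow> real \<Rightarrow> (real \<Rightarrow> complex) \<Rightarrow> bool" where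
  "in_E A B \<alpha> \<beta> L X \<longleftrightarrow>
     L > 0 \<and> W2inf L X \<and>
     (\<forall>s\<in>{0..L}. norm (dcurve L X s) = 1) \<and>
     X 0 = A \<and> X L = B \<and> dcurve L X 0 = \<alpha> \<and> dcurve L X L = \<beta> \<and>
     (\<exists>\<phi>::real \<Rightarrow> real. continuous_on {0..L} \<phi> \<and> mono_on {0..L} \<phi> \<and>
        (\<forall>s\<in>{0..L}. dcurve L X s = \<alpha> * cis (\<phi> s)))"

definition arc_start :: "real \<Rightarrow> (nat \<Rightarrow> real) \<Rightarrow> nat \<Rightarrow> real" where
  "arc_start \<theta>0 R k = \<theta>0 * (\<Sum>j<k. R j)"

text \<open>The curve made of p consecutive circular arcs, in the complex frame with origin A and
  first axis alpha (so it starts at 0 with tangent 1): the k-th arc has radius R k and turns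
  counterclockwise by theta0.  At arclength s the k-th arc has been traversed over the length
  min (R k * theta0) (max 0 (s - arc_start k)); a traversal of length c of the k-th arc
  contributes  i R_k e^{i k theta0} (1 - e^{i c / R_k}).\<close>
definition arcs_curve :: "nat \<Rightarrow> real \<Rightarrow> (nat \<Rightarrow> real) \<Rightarrow> real \<Rightarrow> complex" where
  "arcs_curve p \<theta>0 R s =
     (\<Sum>k<p. \<i> * of_real (R k) * cis (real k * \<theta>0) *
        (1 - cis (min (R k * \<theta>0) (max 0 (s - arc_start \<theta>0 R k)) / R k)))"

end

theory Submission
  imports Defs
begin

text \<open>On the k-th arc the tangent angle \<phi> grows linearly with slope 1/R_k, so the curve
  has derivative \<alpha> cis \<phi>, where \<phi> is continuous, nondecreasing, \<phi>(0) = 0 and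
  \<phi>(L) = p \<theta>0 = \<Omega>. This derivative is continuous and piecewise C^1 off the finitely many
  junctions, so the curve is W^{2,\<infinity>} and every condition defining \<E> except X(L) = B holds
  automatically; summing the chords of the arcs gives
  X(L) = A + \<alpha> \<Sum>k. i (1 - e^{i \<theta>0}) e^{i k \<theta>0} R_k.
  On the k-th arc the second derivative has modulus 1/R_k, and the junctions form a null set,
  whence the essential supremum.\<close>

lemma has_vector_derivative_cis:
  assumes "(f has_real_derivative d) (at x within S)"
  shows "((\<lambda>t. cis (f t)) has_vector_derivative \<i> * cis (f x) * of_real d) (at x within S)"
  using has_derivative_cis[OF assms[unfolded has_field_derivative_def]]
  by (simp add: has_vector_derivative_def scaleR_conv_of_real mult_ac)

lemma sum_lessThan_pivot:
  fixes F :: "nat \<Rightarrow> 'a::comm_monoid_add"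
  assumes "m < p" and "\<And>k. m < k \<Longrightarrow> k < p \<Longrightarrow> F k = 0"
  shows "(\<Sum>k<p. F k) = (\<Sum>k<m. F k) + F m"
proof -
  have "(\<Sum>k<p. F k) = (\<Sum>k<Suc m. F k)"
    using assms by (intro sum.mono_neutral_right) auto
  then show ?thesis by simp
qed

lemma has_vector_derivative_within_Icc_off_finite:
  fixes f :: "real \<Rightarrow> 'a::banach"
  assumes "finite K" and "continuous_on {a..b} f" and "continuous_on {a..b} f'"
    and "\<And>t. t \<in> {a<..<b} - K \<Longrightarrow> (f has_vector_derivative f' t) (at t)"
    and "t \<in> {a..b}"
  shows "(f has_vector_derivative f' t) (at t within {a..b})"
proof (rule has_vector_derivative_transform[OF assms(5)])
  fix x assume x: "x \<in> {a..b}"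
  have "(f' has_integral (f x - f a)) {a..x}"
    using x assms(1,4) by (intro fundamental_theorem_of_calculus_interior_strong[of K])
      (auto intro: continuous_on_subset[OF assms(2)])
  then show "f x = f a + integral {a..x} f'"
    by (simp add: integral_unique)
next
  have "((\<lambda>x. f a + integral {a..x} f') has_vector_derivative 0 + f' t) (at t within {a..b})"
    by (intro has_vector_derivative_add has_vector_derivative_const
        integral_has_vector_derivative assms(3,5))
  then show "((\<lambda>x. f a + integral {a..x} f') has_vector_derivative f' t) (at t within {a..b})"
    by simp
qed

lemma W2infI:
  assumes "0 \<le> L" and "finite K"
    and "\<And>t. t \<in> {0..L} \<Longrightarrow> (X has_vector_derivative X' t) (at t within {0..L})"
    and "continuous_on {0..L} X'"
    and "\<And>t. t \<in> {0<..<L} - K \<Longrightarrow> (X' has_vector_derivative X'' t) (at t)"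
    and "\<And>t. norm (X'' t) \<le> C"
  shows "W2inf L X"
proof -
  have integral_X'': "(X'' has_integral (X' t - X' 0)) {0..t}" if "t \<in> {0..L}" for t
    using that assms(2,5) by (intro fundamental_theorem_of_calculus_interior_strong[of K])
      (auto intro: continuous_on_subset[OF assms(4)])
  have "X'' integrable_on {0..L}"
    using integral_X''[of L] assms(1) has_integral_integrable by auto
  moreover have "\<forall>t\<in>{0..L}. X' t = X' 0 + integral {0..t} X''"
    using integral_unique[OF integral_X''] by simp
  moreover have "AE t in lebesgue_on {0..L}. norm (X'' t) \<le> C"
    using assms(6) by simp
  ultimately show ?thesis
    unfolding W2inf_def using assms(3) by blast
qed

lemma esssup_lebesgue_on_eqI:
  fixes F :: "real \<Rightarrow> ereal"
  assumes S: "S \<in> sets lebesgue" and F: "F \<in> borel_measurable (lebesgue_on S)"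
    and K: "finite K" and le: "\<And>s. s \<in> S - K \<Longrightarrow> F s \<le> c"
    and uv: "u < v" "{u<..<v} \<subseteq> S" and ge: "\<And>s. s \<in> {u<..<v} \<Longrightarrow> c \<le> F s"
  shows "esssup (lebesgue_on S) F = c"
proof (rule antisym)
  have "K \<inter> S \<in> null_sets (lebesgue_on S)"
    using K S by (auto simp: null_sets_restrict_space
        intro: null_sets_completionI finite_imp_null_set_lborel)
  then have "AE s in lebesgue_on S. F s \<le> c"
    by (rule AE_I') (use le in auto)
  then show "esssup (lebesgue_on S) F \<le> c"
    by (rule esssup_I[OF F])
next
  show "c \<le> esssup (lebesgue_on S) F"
  proof (rule ccontr)
    assume less: "\<not> c \<le> esssup (lebesgue_on S) F"
    from esssup_AE[of F "lebesgue_on S"] have "AE s in lebesgue_on S. s \<notin> {u<..<v}"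
      by eventually_elim (use ge less in force)
    then have "{u<..<v} \<in> null_sets (lebesgue_on S)"
      using uv S by (subst AE_iff_null_sets) (auto simp: sets_restrict_space_iff)
    moreover have "emeasure (lebesgue_on S) {u<..<v} = ennreal (v - u)"
      using uv S by (subst emeasure_restrict_space) auto
    ultimately show False
      using uv null_setsD1 by force
  qed
qed

lemma eq_sum_iff_Re_Im:
  fixes b :: complex and c :: "nat \<Rightarrow> complex" and x :: "nat \<Rightarrow> real"
  shows "b = (\<Sum>k<p. c k * of_real (x k)) \<longleftrightarrow>
           (\<Sum>k=1..p. Re (c (k - 1)) * x (k - 1)) = Re b \<and>
           (\<Sum>k=1..p. Im (c (k - 1)) * x (k - 1)) = Im b"
proof -
  have "(\<Sum>k=1..p. Re (c (k - 1)) * x (k - 1)) = (\<Sum>k<p. Re (c k) * x k)"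
    and "(\<Sum>k=1..p. Im (c (k - 1)) * x (k - 1)) = (\<Sum>k<p. Im (c k) * x k)"
    using sum.atLeast1_atMost_eq[of "\<lambda>k. Re (c (k - 1)) * x (k - 1)" p]
      sum.atLeast1_atMost_eq[of "\<lambda>k. Im (c (k - 1)) * x (k - 1)" p]
    by simp_all
  then show ?thesis
    by (auto simp: complex_eq_iff Re_sum Im_sum)
qed

lemma arc_start_0 [simp]: "arc_start \<theta> R 0 = 0"
  by (simp add: arc_start_def)

lemma arc_start_Suc: "arc_start \<theta> R (Suc k) = arc_start \<theta> R k + \<theta> * R k"
  by (simp add: arc_start_def algebra_simps)

locale circular_arcs =
  fixes p :: nat and \<theta> :: real and R :: "nat \<Rightarrow> real"
  assumes turn_pos: "0 < \<theta>" and radius_pos: "k < p \<Longrightarrow> 0 < R k"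
begin

declare radius_pos [simp]

lemma radius_neq_0 [simp]: "k < p \<Longrightarrow> R k \<noteq> 0"
  using radius_pos by (simp add: less_imp_neq[symmetric])

lemma arc_start_mono:
  assumes "k \<le> j" and "j \<le> p"
  shows "arc_start \<theta> R k \<le> arc_start \<theta> R j"
proof -
  have "(\<Sum>i<k. R i) \<le> (\<Sum>i<j. R i)"
    using assms radius_pos by (intro sum_mono2) (auto intro: less_imp_le)
  then show ?thesis
    using turn_pos by (simp add: arc_start_def)
qed

lemma arc_start_less_Suc: "k < p \<Longrightarrow> arc_start \<theta> R k < arc_start \<theta> R (Suc k)"
  using turn_pos radius_pos by (simp add: arc_start_Suc)

lemma obtain_open_arc:
  assumes "s \<in> {0..arc_start \<theta> R p} - arc_start \<theta> R ` {..p}"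
  obtains m where "m < p" "arc_start \<theta> R m < s" "s < arc_start \<theta> R (Suc m)"
proof -
  define M where "M = {k. k < p \<and> arc_start \<theta> R k < s}"
  have "arc_start \<theta> R 0 \<in> arc_start \<theta> R ` {..p}"
    by blast
  then have "0 < s" "p \<noteq> 0"
    using assms by (auto simp: le_less)
  then have "0 \<in> M" "finite M"
    by (auto simp: M_def)
  then have m: "Max M \<in> M"
    by (intro Max_in) auto
  then have "Suc (Max M) \<in> {..p}"
    by (simp add: M_def Suc_le_eq)
  then have "arc_start \<theta> R (Suc (Max M)) \<noteq> s"
    using assms by blast
  moreover have "arc_start \<theta> R (Suc (Max M)) \<ge> s"
  proof (cases "Suc (Max M) < p")
    case True
    have "Suc (Max M) \<notin> M"
      using Max_ge[OF \<open>finite M\<close>, of "Suc (Max M)"] by auto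
    then show ?thesis
      using True by (auto simp: M_def not_less)
  next
    case False
    then have "Suc (Max M) = p"
      using m by (auto simp: M_def)
    then show ?thesis
      using assms by auto
  qed
  ultimately show ?thesis
    using m that by (auto simp: M_def)
qed

definition arc_turn :: "nat \<Rightarrow> real \<Rightarrow> real" where
  "arc_turn k s = min (R k * \<theta>) (max 0 (s - arc_start \<theta> R k)) / R k"

definition tangent_angle :: "real \<Rightarrow> real" where
  "tangent_angle s = (\<Sum>k<p. arc_turn k s)"

definition curvature :: "real \<Rightarrow> real" where
  "curvature s =
     (\<Sum>k<p. if arc_start \<theta> R k < s \<and> s < arc_start \<theta> R (Suc k) then 1 / R k else 0)"

lemma arcs_curve_eq:
  "arcs_curve p \<theta> R s = (\<Sum>k<p. \<i> * of_real (R k) * cis (real k * \<theta>) * (1 - cis (arc_turn k s)))"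
  by (simp add: arcs_curve_def arc_turn_def)

lemma arc_turn_before: "k < p \<Longrightarrow> s \<le> arc_start \<theta> R k \<Longrightarrow> arc_turn k s = 0"
  using turn_pos radius_pos by (simp add: arc_turn_def)

lemma arc_turn_after: "k < p \<Longrightarrow> arc_start \<theta> R (Suc k) \<le> s \<Longrightarrow> arc_turn k s = \<theta>"
  using turn_pos radius_pos by (simp add: arc_turn_def arc_start_Suc algebra_simps)

lemma arc_turn_on_arc:
  assumes "m < p" and "k < p" and "arc_start \<theta> R m \<le> s" and "s \<le> arc_start \<theta> R (Suc m)"
  shows "arc_turn k s = (if k < m then \<theta> else if k = m then (s - arc_start \<theta> R m) / R m else 0)"
proof -
  have "arc_start \<theta> R (Suc k) \<le> arc_start \<theta> R m" if "k < m"
    using that assms by (intro arc_start_mono) auto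
  moreover have "arc_start \<theta> R (Suc m) \<le> arc_start \<theta> R k" if "m < k"
    using that assms by (intro arc_start_mono) auto
  ultimately show ?thesis
    using assms arc_turn_before arc_turn_after
    by (auto simp: arc_turn_def arc_start_Suc mult.commute)
qed

lemma mono_arc_turn: "k < p \<Longrightarrow> mono (arc_turn k)"
  unfolding arc_turn_def
  by (intro monoI divide_right_mono min.mono max.mono) (auto simp: less_imp_le)

lemma mono_tangent_angle: "mono tangent_angle"
  unfolding tangent_angle_def using mono_arc_turn
  by (auto intro!: monoI sum_mono dest: monoD)

lemma continuous_on_tangent_angle: "continuous_on S tangent_angle"
  unfolding tangent_angle_def arc_turn_def using radius_pos
  by (intro continuous_intros) auto

lemma continuous_on_arcs_curve: "continuous_on S (arcs_curve p \<theta> R)"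
  unfolding arcs_curve_def using radius_pos
  by (intro continuous_intros) auto

lemma borel_measurable_curvature: "(\<lambda>s. ereal (curvature s)) \<in> borel_measurable (lebesgue_on S)"
proof -
  note id_borel_measurable_lebesgue_on[unfolded id_def, measurable]
  show ?thesis
    unfolding curvature_def by measurable
qed

lemma tangent_angle_on_arc:
  assumes "m < p" and "arc_start \<theta> R m \<le> s" and "s \<le> arc_start \<theta> R (Suc m)"
  shows "tangent_angle s = real m * \<theta> + (s - arc_start \<theta> R m) / R m"
proof -
  note turns = arc_turn_on_arc[OF assms(1) _ assms(2,3)]
  have "tangent_angle s = (\<Sum>k<m. arc_turn k s) + arc_turn m s"
    unfolding tangent_angle_def using assms by (intro sum_lessThan_pivot) (auto simp: turns)
  also have "(\<Sum>k<m. arc_turn k s) = real m * \<theta>"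
    using assms by (simp add: turns)
  finally show ?thesis
    using assms by (simp add: turns)
qed

lemma arcs_curve_on_arc:
  assumes "m < p" and "arc_start \<theta> R m \<le> s" and "s \<le> arc_start \<theta> R (Suc m)"
  shows "arcs_curve p \<theta> R s =
           (\<Sum>k<m. \<i> * of_real (R k) * cis (real k * \<theta>) * (1 - cis \<theta>))
           + \<i> * of_real (R m) * cis (real m * \<theta>) - \<i> * of_real (R m) * cis (tangent_angle s)"
proof -
  note turns = arc_turn_on_arc[OF assms(1) _ assms(2,3)]
  have "arcs_curve p \<theta> R s =
          (\<Sum>k<m. \<i> * of_real (R k) * cis (real k * \<theta>) * (1 - cis (arc_turn k s)))
          + \<i> * of_real (R m) * cis (real m * \<theta>) * (1 - cis (arc_turn m s))"
    unfolding arcs_curve_eq using assms by (intro sum_lessThan_pivot) (auto simp: turns)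
  moreover have "cis (real m * \<theta>) * cis (arc_turn m s) = cis (tangent_angle s)"
    using assms by (simp add: turns tangent_angle_on_arc cis_mult)
  ultimately show ?thesis
    using assms by (simp add: turns algebra_simps)
qed

lemma curvature_on_arc:
  assumes "m < p" and "arc_start \<theta> R m < s" and "s < arc_start \<theta> R (Suc m)"
  shows "curvature s = 1 / R m"
proof -
  have off_arc: "(if arc_start \<theta> R k < s \<and> s < arc_start \<theta> R (Suc k) then 1 / R k else 0) = 0"
    if "k < p" "k \<noteq> m" for k
  proof (cases "k < m")
    case True
    then have "arc_start \<theta> R (Suc k) \<le> arc_start \<theta> R m"
      using assms by (intro arc_start_mono) auto
    then show ?thesis
      using assms by auto
  next
    case False
    then have "arc_start \<theta> R (Suc m) \<le> arc_start \<theta> R k"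
      using that assms by (intro arc_start_mono) auto
    then show ?thesis
      using assms by auto
  qed
  show ?thesis
    unfolding curvature_def using assms
    by (subst sum_lessThan_pivot[of m]) (auto simp: off_arc intro!: sum.neutral)
qed

lemma abs_curvature_le: "\<bar>curvature s\<bar> \<le> (\<Sum>k<p. 1 / R k)"
  unfolding curvature_def
  by (intro order_trans[OF sum_abs] sum_mono) (auto simp: less_imp_le)

lemma tangent_angle_has_derivative_on_arc:
  assumes "m < p" and "arc_start \<theta> R m < s" and "s < arc_start \<theta> R (Suc m)"
  shows "(tangent_angle has_real_derivative 1 / R m) (at s)"
proof (rule has_field_derivative_transform_within_open)
  show "((\<lambda>t. real m * \<theta> + (t - arc_start \<theta> R m) / R m) has_real_derivative 1 / R m) (at s)"
    using assms by (auto intro!: derivative_eq_intros)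
  show "real m * \<theta> + (t - arc_start \<theta> R m) / R m = tangent_angle t"
    if "t \<in> {arc_start \<theta> R m<..<arc_start \<theta> R (Suc m)}" for t
    using that assms by (simp add: tangent_angle_on_arc)
qed (use assms in auto)

lemma cis_tangent_angle_has_derivative_on_arc:
  assumes "m < p" and "arc_start \<theta> R m < s" and "s < arc_start \<theta> R (Suc m)"
  shows "((\<lambda>t. cis (tangent_angle t)) has_vector_derivative
           \<i> * cis (tangent_angle s) * of_real (curvature s)) (at s)"
  using has_vector_derivative_cis[OF tangent_angle_has_derivative_on_arc[OF assms]]
  by (simp add: curvature_on_arc[OF assms])

lemma arcs_curve_has_derivative_on_arc:
  assumes "m < p" and "arc_start \<theta> R m < s" and "s < arc_start \<theta> R (Suc m)"
  shows "(arcs_curve p \<theta> R has_vector_derivative cis (tangent_angle s)) (at s)"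
proof (rule has_vector_derivative_transform_within_open)
  define c where "c = (\<Sum>k<m. \<i> * of_real (R k) * cis (real k * \<theta>) * (1 - cis \<theta>))
                       + \<i> * of_real (R m) * cis (real m * \<theta>)"
  have "((\<lambda>t. c - \<i> * of_real (R m) * cis (tangent_angle t)) has_vector_derivative
          0 - \<i> * of_real (R m) * (\<i> * cis (tangent_angle s) * of_real (1 / R m))) (at s)"
    by (intro has_vector_derivative_diff has_vector_derivative_const has_vector_derivative_mult_right
        has_vector_derivative_cis tangent_angle_has_derivative_on_arc assms)
  then show "((\<lambda>t. c - \<i> * of_real (R m) * cis (tangent_angle t)) has_vector_derivative
               cis (tangent_angle s)) (at s)"
    using assms by (simp add: field_simps)
  show "c - \<i> * of_real (R m) * cis (tangent_angle t) = arcs_curve p \<theta> R t"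
    if "t \<in> {arc_start \<theta> R m<..<arc_start \<theta> R (Suc m)}" for t
    using that assms by (simp add: arcs_curve_on_arc c_def)
qed (use assms in auto)

lemma arcs_curve_has_derivative:
  assumes "t \<in> {0..arc_start \<theta> R p}"
  shows "(arcs_curve p \<theta> R has_vector_derivative cis (tangent_angle t))
           (at t within {0..arc_start \<theta> R p})"
proof (rule has_vector_derivative_within_Icc_off_finite[OF _ _ _ _ assms])
  show "(arcs_curve p \<theta> R has_vector_derivative cis (tangent_angle s)) (at s)"
    if s: "s \<in> {0<..<arc_start \<theta> R p} - arc_start \<theta> R ` {..p}" for s
  proof -
    obtain m where "m < p" "arc_start \<theta> R m < s" "s < arc_start \<theta> R (Suc m)"
      by (rule obtain_open_arc[of s]) (use s in auto)
    then show ?thesis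
      by (rule arcs_curve_has_derivative_on_arc)
  qed
qed (simp_all add: continuous_on_arcs_curve continuous_on_cis continuous_on_tangent_angle)

lemma arc_turn_0: "k < p \<Longrightarrow> arc_turn k 0 = 0"
  using arc_start_mono[of 0 k] by (simp add: arc_turn_before)

lemma arc_turn_end: "k < p \<Longrightarrow> arc_turn k (arc_start \<theta> R p) = \<theta>"
  using arc_start_mono[of "Suc k" p] by (simp add: arc_turn_after)

lemma tangent_angle_0: "tangent_angle 0 = 0"
  by (simp add: tangent_angle_def arc_turn_0)

lemma tangent_angle_end: "tangent_angle (arc_start \<theta> R p) = real p * \<theta>"
  by (simp add: tangent_angle_def arc_turn_end)

lemma arcs_curve_0: "arcs_curve p \<theta> R 0 = 0"
  by (simp add: arcs_curve_eq arc_turn_0)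

lemma arcs_curve_end:
  "arcs_curve p \<theta> R (arc_start \<theta> R p) =
     (\<Sum>k<p. \<i> * (1 - cis \<theta>) * cis (real k * \<theta>) * of_real (R k))"
  by (auto simp: arcs_curve_eq arc_turn_end mult_ac intro!: sum.cong)

lemma in_E_arcs_curve_iff:
  assumes "0 < p" and "norm \<alpha> = 1" and "\<beta> = \<alpha> * cis (real p * \<theta>)"
  shows "in_E A B \<alpha> \<beta> (arc_start \<theta> R p) (\<lambda>s. A + \<alpha> * arcs_curve p \<theta> R s) \<longleftrightarrow>
           B = A + \<alpha> * arcs_curve p \<theta> R (arc_start \<theta> R p)"
proof -
  define L where "L = arc_start \<theta> R p"
  define X where "X = (\<lambda>s. A + \<alpha> * arcs_curve p \<theta> R s)"
  have "arc_start \<theta> R 0 < arc_start \<theta> R (Suc 0)"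
    using assms(1) by (intro arc_start_less_Suc)
  also have "\<dots> \<le> L"
    using assms(1) by (simp add: L_def arc_start_mono)
  finally have "0 < L"
    by simp
  have X': "(X has_vector_derivative \<alpha> * cis (tangent_angle s)) (at s within {0..L})"
    if "s \<in> {0..L}" for s
    using that unfolding X_def L_def
    by (auto intro!: derivative_eq_intros arcs_curve_has_derivative)
  then have dcurve: "dcurve L X s = \<alpha> * cis (tangent_angle s)" if "s \<in> {0..L}" for s
    unfolding dcurve_def using that \<open>0 < L\<close>
    by (metis vector_derivative_within_cbox cbox_interval)
  have "W2inf L X"
  proof (rule W2infI[where K = "arc_start \<theta> R ` {..p}" and X' = "\<lambda>t. \<alpha> * cis (tangent_angle t)"
        and X'' = "\<lambda>t. \<alpha> * (\<i> * cis (tangent_angle t) * of_real (curvature t))"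
        and C = "\<Sum>k<p. 1 / R k"])
    show "((\<lambda>t. \<alpha> * cis (tangent_angle t)) has_vector_derivative
            \<alpha> * (\<i> * cis (tangent_angle t) * of_real (curvature t))) (at t)"
      if t: "t \<in> {0<..<L} - arc_start \<theta> R ` {..p}" for t
    proof -
      obtain m where "m < p" "arc_start \<theta> R m < t" "t < arc_start \<theta> R (Suc m)"
        by (rule obtain_open_arc[of t]) (use t in \<open>auto simp: L_def\<close>)
      then show ?thesis
        by (intro has_vector_derivative_mult_right cis_tangent_angle_has_derivative_on_arc)
    qed
    show "norm (\<alpha> * (\<i> * cis (tangent_angle t) * of_real (curvature t))) \<le> (\<Sum>k<p. 1 / R k)" for t
      using abs_curvature_le assms(2) by (simp add: norm_mult)
  qed (use \<open>0 < L\<close> X' in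
        \<open>simp_all add: continuous_on_mult_left continuous_on_cis continuous_on_tangent_angle\<close>)
  moreover have "\<forall>s\<in>{0..L}. norm (dcurve L X s) = 1"
    using dcurve assms(2) by (simp add: norm_mult)
  moreover have "X 0 = A" and "X L = A + \<alpha> * arcs_curve p \<theta> R (arc_start \<theta> R p)"
    by (simp_all add: X_def L_def arcs_curve_0)
  moreover have "dcurve L X 0 = \<alpha>" and "dcurve L X L = \<beta>"
    using dcurve[of 0] dcurve[of L] \<open>0 < L\<close> assms(3)
    by (simp_all add: tangent_angle_0 tangent_angle_end L_def)
  moreover have "continuous_on {0..L} tangent_angle" and "mono_on {0..L} tangent_angle"
    by (simp_all add: continuous_on_tangent_angle mono_imp_mono_on mono_tangent_angle)
  ultimately show ?thesis
    unfolding in_E_def L_def[symmetric] X_def[symmetric] using \<open>0 < L\<close> dcurve by auto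
qed

lemma norm_arcs_curve_second_derivative_on_arc:
  assumes "norm \<alpha> = 1" and "m < p" and "arc_start \<theta> R m < s" and "s < arc_start \<theta> R (Suc m)"
  shows "norm (vector_derivative (\<lambda>t. vector_derivative (\<lambda>u. A + \<alpha> * arcs_curve p \<theta> R u) (at t)) (at s))
           = 1 / R m"
proof -
  let ?X = "\<lambda>u. A + \<alpha> * arcs_curve p \<theta> R u"
  let ?I = "{arc_start \<theta> R m<..<arc_start \<theta> R (Suc m)}"
  have X': "vector_derivative ?X (at t) = \<alpha> * cis (tangent_angle t)" if "t \<in> ?I" for t
  proof -
    have "(?X has_vector_derivative 0 + \<alpha> * cis (tangent_angle t)) (at t)"
      using that assms(2) by (intro has_vector_derivative_add has_vector_derivative_const
          has_vector_derivative_mult_right arcs_curve_has_derivative_on_arc) auto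
    then show ?thesis
      by (simp add: vector_derivative_at)
  qed
  have "((\<lambda>t. \<alpha> * cis (tangent_angle t)) has_vector_derivative
          \<alpha> * (\<i> * cis (tangent_angle s) * of_real (curvature s))) (at s)"
    using assms(2-4) by (intro has_vector_derivative_mult_right cis_tangent_angle_has_derivative_on_arc)
  then have "((\<lambda>t. vector_derivative ?X (at t)) has_vector_derivative
               \<alpha> * (\<i> * cis (tangent_angle s) * of_real (curvature s))) (at s)"
    by (rule has_vector_derivative_transform_within_open[where S = ?I]) (use assms X' in auto)
  then show ?thesis
    using assms by (simp add: vector_derivative_at norm_mult norm_divide abs_of_pos curvature_on_arc)
qed

lemma esssup_norm_arcs_curve_second_derivative:
  assumes "0 < p" and "norm \<alpha> = 1"
  shows "esssup (lebesgue_on {0..arc_start \<theta> R p})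
           (\<lambda>s. ereal (norm (vector_derivative
              (\<lambda>t. vector_derivative (\<lambda>u. A + \<alpha> * arcs_curve p \<theta> R u) (at t)) (at s))))
         = ereal (1 / Min (R ` {..<p}))"
proof -
  define F where "F = (\<lambda>s. ereal (norm (vector_derivative
              (\<lambda>t. vector_derivative (\<lambda>u. A + \<alpha> * arcs_curve p \<theta> R u) (at t)) (at s))))"
  define K where "K = arc_start \<theta> R ` {..p}"
  have F_on_arc: "F s = ereal (1 / R m)"
    if "m < p" "arc_start \<theta> R m < s" "s < arc_start \<theta> R (Suc m)" for m s
    using norm_arcs_curve_second_derivative_on_arc[OF assms(2) that] by (simp add: F_def)
  have K_sub: "K \<subseteq> {0..arc_start \<theta> R p}"
    using arc_start_mono[of 0] arc_start_mono[of _ p] by (auto simp: K_def)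
  have "Min (R ` {..<p}) \<in> R ` {..<p}"
    using assms(1) by (intro Min_in) auto
  then obtain m0 where m0: "m0 < p" "R m0 = Min (R ` {..<p})"
    by (metis imageE lessThan_iff)
  show ?thesis
    unfolding F_def[symmetric]
  proof (rule esssup_lebesgue_on_eqI[where K = K and u = "arc_start \<theta> R m0"
        and v = "arc_start \<theta> R (Suc m0)"])
    show "F \<in> borel_measurable (lebesgue_on {0..arc_start \<theta> R p})"
    proof (rule measurable_discrete_difference[OF borel_measurable_curvature])
      show "{s} \<in> sets (lebesgue_on {0..arc_start \<theta> R p})" if "s \<in> K" for s
        using that K_sub by (subst sets_restrict_space_iff) auto
      show "ereal (curvature s) = F s"
        if s: "s \<in> space (lebesgue_on {0..arc_start \<theta> R p})" "s \<notin> K" for s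
      proof -
        obtain m where "m < p" "arc_start \<theta> R m < s" "s < arc_start \<theta> R (Suc m)"
          by (rule obtain_open_arc[of s]) (use s in \<open>auto simp: K_def\<close>)
        then show ?thesis
          by (simp add: F_on_arc curvature_on_arc)
      qed
    qed (simp_all add: K_def)
    show "F s \<le> ereal (1 / Min (R ` {..<p}))" if s: "s \<in> {0..arc_start \<theta> R p} - K" for s
    proof -
      obtain m where m: "m < p" "arc_start \<theta> R m < s" "s < arc_start \<theta> R (Suc m)"
        by (rule obtain_open_arc[of s]) (use s in \<open>auto simp: K_def\<close>)
      then have "R m0 \<le> R m"
        using m0 by simp
      then have "1 / R m \<le> 1 / R m0"
        using m(1) m0(1) by (intro divide_left_mono) auto
      then show ?thesis
        using m m0(2) by (simp add: F_on_arc)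
    qed
    show "{arc_start \<theta> R m0<..<arc_start \<theta> R (Suc m0)} \<subseteq> {0..arc_start \<theta> R p}"
      using m0 arc_start_mono[of 0 m0] arc_start_mono[of "Suc m0" p] by auto
    show "arc_start \<theta> R m0 < arc_start \<theta> R (Suc m0)"
      using m0(1) by (rule arc_start_less_Suc)
    show "ereal (1 / Min (R ` {..<p})) \<le> F s"
      if "s \<in> {arc_start \<theta> R m0<..<arc_start \<theta> R (Suc m0)}" for s
      using that m0 by (simp add: F_on_arc)
  qed (simp_all add: K_def)
qed

end

theorem proposition5p2:
  fixes P\<^sub>O A B :: complex and p :: nat and R :: "nat \<Rightarrow> real" and \<Omega> :: real
  assumes "P\<^sub>O \<noteq> A" and "P\<^sub>O \<noteq> B" and "A \<noteq> B"
    and "0 < \<Omega>" and "\<Omega> < pi"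
    and "(B - P\<^sub>O) / of_real (cmod (B - P\<^sub>O)) = ((P\<^sub>O - A) / of_real (cmod (P\<^sub>O - A))) * cis \<Omega>"
    and "p \<ge> 1"
    and "\<forall>k<p. R k > 0"
  shows "let \<alpha> = (P\<^sub>O - A) / of_real (cmod (P\<^sub>O - A));
             \<beta> = (B - P\<^sub>O) / of_real (cmod (B - P\<^sub>O));
             b = (B - A) / \<alpha>;
             \<theta>0 = \<Omega> / real p;
             L = \<theta>0 * (\<Sum>k<p. R k);
             X = (\<lambda>s. A + \<alpha> * arcs_curve p \<theta>0 R s);
             c = (\<lambda>k::nat. \<i> * (1 - cis \<theta>0) * cis (real k * \<theta>0))
         in (in_E A B \<alpha> \<beta> L X \<longleftrightarrow> b = (\<Sum>k<p. c k * of_real (R k)))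
          \<and> (b = (\<Sum>k<p. c k * of_real (R k)) \<longleftrightarrow>
               ((\<Sum>k=1..p. Re (c (k - 1)) * R (k - 1)) = Re b \<and>
                (\<Sum>k=1..p. Im (c (k - 1)) * R (k - 1)) = Im b))
          \<and> esssup (lebesgue_on {0..L})
               (\<lambda>s. ereal (norm (vector_derivative (\<lambda>t. vector_derivative X (at t)) (at s))))
             = ereal (1 / Min (R ` {..<p}))"
proof -
  define \<alpha> where "\<alpha> = (P\<^sub>O - A) / of_real (cmod (P\<^sub>O - A))"
  define \<beta> where "\<beta> = (B - P\<^sub>O) / of_real (cmod (B - P\<^sub>O))"
  define \<theta> where "\<theta> = \<Omega> / real p"
  interpret circular_arcs p \<theta> R
    using assms(4,7,8) by unfold_locales (auto simp: \<theta>_def)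
  have p: "0 < p"
    using assms(7) by simp
  have \<alpha>: "norm \<alpha> = 1"
    using assms(1) by (simp add: \<alpha>_def norm_divide)
  have \<beta>: "\<beta> = \<alpha> * cis (real p * \<theta>)"
    using assms(6) p by (simp add: \<alpha>_def \<beta>_def \<theta>_def)
  have L: "\<theta> * (\<Sum>k<p. R k) = arc_start \<theta> R p"
    by (simp add: arc_start_def)
  have "in_E A B \<alpha> \<beta> (arc_start \<theta> R p) (\<lambda>s. A + \<alpha> * arcs_curve p \<theta> R s) \<longleftrightarrow>
          (B - A) / \<alpha> = (\<Sum>k<p. \<i> * (1 - cis \<theta>) * cis (real k * \<theta>) * of_real (R k))"
  proof -
    have "B = A + \<alpha> * z \<longleftrightarrow> (B - A) / \<alpha> = z" for z
      using \<alpha> by (auto simp: divide_eq_eq algebra_simps)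
    then show ?thesis
      unfolding in_E_arcs_curve_iff[OF p \<alpha> \<beta>] arcs_curve_end .
  qed
  then show ?thesis
    unfolding Let_def \<alpha>_def[symmetric] \<beta>_def[symmetric] \<theta>_def[symmetric] L
    by (intro conjI eq_sum_iff_Re_Im esssup_norm_arcs_curve_second_derivative[OF p \<alpha>])
qed

end
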